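(* Fix $N\in\mathbb{N}$, a particle density parameter $\rho$, and let $\mathcal{E}\subset\mathbb{R}$ be the set of possible energy densities. For each $\varepsilon\in\mathcal{E}$ let $\mu_{\mathrm{MC}}^{\varepsilon,\rho;N}$ be a permutation invariant probability measure on $\mathbb{R}^N$ (the microcanonical ensemble) supported on $\{\phi: H[\phi]=\varepsilon N\}$, for a measurable energy function $H:\mathbb{R}^N\to\mathbb{R}$, and let $Z_{\mathrm{MC}}(\varepsilon,\rho;N)\ge0$ be weights. For $\beta\in\mathbb{R}$ with $0<\int d\varepsilon\,e^{-N\beta\varepsilon}Z_{\mathrm{MC}}(\varepsilon,\rho;N)<\infty$, define the canonical ensemble by \[ \langle g\rangle_{\mathrm{C}}^{\beta,\rho;N}=\frac{\int d\varepsilon'\,e^{-N\beta\varepsilon'}Z_{\mathrm{MC}}(\varepsilon',\rho;N)\langle g\rangle_{\mathrm{MC}}^{\varepsilon',\rho;N}}{\int d\varepsilon'\,e^{-N\beta\varepsilon'}Z_{\mathrm{MC}}(\varepsilon',\rho;N)}. \] Assume that for the given $\varepsilon\in\mathcal{E}$ there is a constant $C(\varepsilon,\rho)>0$, independent of $N$ and of $\varepsilon'$, such that for some $p\ge1$ and all $\varepsilon'\in\mathcal{E}$, $w_p(\mu_{\mathrm{MC}}^{\varepsilon,\rho;N},\mu_{\mathrm{MC}}^{\varepsilon',\rho;N};N)\le C(\varepsilon,\rho)|\varepsilon-\varepsilon'|$. Suppose also that the microcanonical and canonical measures have finite $p$:th moments. Fix $n<\infty$ and let $I\subset[N]$ with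 $|I|=n$, and let $f:\mathbb{R}^{|I|}\to\mathbb{R}$ be a bounded $1$-Lipschitz function with respect to $\|\cdot\|_p$. Then \[ \left|\langle f\circ P_I\rangle_{\mathrm{MC}}^{\varepsilon,\rho;N}-\langle f\circ P_I\rangle_{\mathrm{C}}^{\beta,\rho;N}\right|\le C(\varepsilon,\rho)\left(\frac{|I|}{1-\frac{|I|}{N}}\right)^{1/p}\left(\sigma_{\mathrm{C}}^{\beta,\rho;N}\!\left(\frac HN\right)+\left|\varepsilon-\frac{\langle H\rangle_{\mathrm{C}}^{\beta,\rho;N}}{N}\right|\right), \] where $\sigma_{\mathrm{C}}^{\beta,\rho;N}(H/N)=\sqrt{\big(\langle H^2\rangle_{\mathrm{C}}^{\beta,\rho;N}-(\langle H\rangle_{\mathrm{C}}^{\beta,\rho;N})^2\big)/N^2}$. Equivalently, with $f_{\mathrm{C}}(\beta,\rho;N)=-\frac1N\ln\int d\varepsilon'\,e^{-N\beta\varepsilon'}Z_{\mathrm{MC}}(\varepsilon',\rho;N)$, the right-hand side equals $C(\varepsilon,\rho)\left(\frac{|I|}{1-\frac{|I|}{N}}\right)^{1/p}\left(\frac1{\sqrt N}\sqrt{-\partial_\beta^2f_{\mathrm{C}}(\beta,\rho;N)}+|\varepsilon-\partial_\beta f_{\mathrm{C}}(\beta,\rho;N)|\right)$.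
   Context: Permutation invariance of a measure $\mu$ on $\mathbb{R}^N$: $\langle f\circ Q_\pi\rangle_\mu=\langle f\rangle_\mu$ for all integrable $f$ and permutations $\pi$ of $[N]=\{1,\dots,N\}$, where $(Q_\pi x)_j=x_{\pi^{-1}(j)}$. For $I\subset[N]$, $P_I:\mathbb{R}^N\to\mathbb{R}^{|I|}$ is the projection onto the coordinates in $I$ listed in increasing order. $w_p(\mu_1,\mu_2;N)=\left(\inf_\gamma\int\gamma(dx,dy)\frac1N\sum_{i=1}^N|x_i-y_i|^p\right)^{1/p}$ with the infimum over all couplings of $\mu_1,\mu_2$. *)

theory Defs
  imports "HOL-Probability.Probability" "HOL-Combinatorics.Permutations"
begin

text \<open>R^N with coordinates indexed by {..<N} (0-based re-indexing of [N]).\<close>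
definition Rn :: "nat \<Rightarrow> (nat \<Rightarrow> real) measure" where
  "Rn N = PiM {..<N} (\<lambda>_. borel)"

definition perm_coord :: "nat \<Rightarrow> (nat \<Rightarrow> nat) \<Rightarrow> (nat \<Rightarrow> real) \<Rightarrow> (nat \<Rightarrow> real)" where
  "perm_coord N \<pi> x = (\<lambda>j\<in>{..<N}. x (inv \<pi> j))"

definition perm_invariant :: "nat \<Rightarrow> (nat \<Rightarrow> real) measure \<Rightarrow> bool" where
  "perm_invariant N M \<longleftrightarrow>
     (\<forall>\<pi>. \<pi> permutes {..<N} \<longrightarrow>
        (\<forall>f :: (nat \<Rightarrow> real) \<Rightarrow> real. integrable M f \<longrightarrow>
            (\<integral>x. f (perm_coord N \<pi> x) \<partial>M) = (\<integral>x. f x \<partial>M)))"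

definition proj_coords :: "nat set \<Rightarrow> (nat \<Rightarrow> real) \<Rightarrow> (nat \<Rightarrow> real)" where
  "proj_coords I x = (\<lambda>k\<in>{..<card I}. x (sorted_list_of_set I ! k))"

definition lp_norm :: "real \<Rightarrow> nat \<Rightarrow> (nat \<Rightarrow> real) \<Rightarrow> real" where
  "lp_norm p n x = (\<Sum>k<n. \<bar>x k\<bar> powr p) powr (1 / p)"

definition couplings :: "'a measure \<Rightarrow> 'b measure \<Rightarrow> ('a \<times> 'b) measure set" where
  "couplings M1 M2 = {\<gamma>. sets \<gamma> = sets (M1 \<Otimes>\<^sub>M M2) \<and>
      distr \<gamma> M1 fst = M1 \<and> distr \<gamma> M2 snd = M2}"

definition wp_cost :: "real \<Rightarrow> nat \<Rightarrow> ((nat \<Rightarrow> real) \<times> (nat \<Rightarrow> real)) measure \<Rightarrow> ennreal" where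
  "wp_cost p N \<gamma> = (\<integral>\<^sup>+ z. ennreal ((1 / real N) * (\<Sum>i<N. \<bar>fst z i - snd z i\<bar> powr p)) \<partial>\<gamma>)"

definition wasserstein_p :: "real \<Rightarrow> (nat \<Rightarrow> real) measure \<Rightarrow> (nat \<Rightarrow> real) measure \<Rightarrow> nat \<Rightarrow> ennreal" where
  "wasserstein_p p M1 M2 N =
     (let c = (INF \<gamma>\<in>couplings M1 M2. wp_cost p N \<gamma>)
      in if c = \<top> then \<top> else ennreal (enn2real c powr (1 / p)))"

definition canon_weight :: "real \<Rightarrow> nat \<Rightarrow> (real \<Rightarrow> real) \<Rightarrow> real \<Rightarrow> real" where
  "canon_weight \<beta> N Z \<epsilon> = exp (- real N * \<beta> * \<epsilon>) * Z \<epsilon>"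

definition canon_partition :: "real set \<Rightarrow> real \<Rightarrow> nat \<Rightarrow> (real \<Rightarrow> real) \<Rightarrow> real" where
  "canon_partition E \<beta> N Z = (LINT \<epsilon>:E|lborel. canon_weight \<beta> N Z \<epsilon>)"

definition canon_exp :: "real set \<Rightarrow> real \<Rightarrow> nat \<Rightarrow> (real \<Rightarrow> real) \<Rightarrow> (real \<Rightarrow> (nat \<Rightarrow> real) measure)
    \<Rightarrow> ((nat \<Rightarrow> real) \<Rightarrow> real) \<Rightarrow> real" where
  "canon_exp E \<beta> N Z \<mu> g =
     (LINT \<epsilon>:E|lborel. canon_weight \<beta> N Z \<epsilon> * (\<integral>\<phi>. g \<phi> \<partial>\<mu> \<epsilon>)) / canon_partition E \<beta> N Z"

end

theory Submission
  imports Defs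
begin

(*
  Fix an energy density e' in E. Permutation invariance of both microcanonical measures lets the
  window I be replaced by any index set J of the same size; averaging over the N cyclic shifts
  of I yields a J carrying at most |I|/N of the total cost of a given coupling. With the
  Lipschitz property of f and Jensen's inequality for t -> t^(1/p) this gives
    |<f o P_I>_MC^e - <f o P_I>_MC^e'| <= |I|^(1/p) w_p <= |I|^(1/p) C |e - e'|.
  The canonical ensemble is the mixture of the microcanonical ones under the law nu of the energy
  density, with density proportional to exp(-N beta e') Z_MC(e') on E. As H = e' N almost surely
  under mu_MC^e', the canonical mean and variance of H/N are those of nu, and integrating the
  Lipschitz bound against nu with E|e - X| <= sigma(X) + |e - E X| gives the claim, even with
  |I|^(1/p) in place of the larger (|I| / (1 - |I|/N))^(1/p).
*)

section \<open>Index sets, permutations and projections\<close>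

lemma bij_betw_add_mod:
  fixes N k :: nat
  assumes N: "0 < N"
  shows "bij_betw (\<lambda>i. (k + i) mod N) {..<N} {..<N}"
proof -
  have "inj_on (\<lambda>i. (k + i) mod N) {..<N}"
  proof (rule inj_onI)
    fix i i' assume i: "i \<in> {..<N}" "i' \<in> {..<N}" and eq: "(k + i) mod N = (k + i') mod N"
    obtain q1 q2 where "k + i + N * q1 = k + i' + N * q2"
      using eq unfolding nat_mod_eq_iff by blast
    then have "i + N * q1 = i' + N * q2" by simp
    then have "i mod N = i' mod N" unfolding nat_mod_eq_iff by blast
    then show "i = i'" using i by simp
  qed
  moreover have "(\<lambda>i. (k + i) mod N) ` {..<N} \<subseteq> {..<N}" using N by auto
  ultimately show ?thesis by (simp add: bij_betw_def endo_inj_surj)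
qed

lemma exists_card_subset_sum_le_average:
  fixes A :: "nat \<Rightarrow> real"
  assumes I: "I \<subseteq> {..<N}" and N: "0 < N"
  obtains J where "J \<subseteq> {..<N}" "card J = card I"
    "(\<Sum>j\<in>J. A j) \<le> real (card I) / real N * (\<Sum>j<N. A j)"
proof -
  define rot where "rot k i = (k + i) mod N" for k i
  define avg where "avg = real (card I) / real N * (\<Sum>j<N. A j)"
  have bij_rot: "bij_betw (rot k) {..<N} {..<N}" for k
    unfolding rot_def by (rule bij_betw_add_mod[OF N])
  have "bij_betw (\<lambda>k. rot k i) {..<N} {..<N}" for i
    using bij_betw_add_mod[OF N, of i] by (simp add: rot_def add.commute)
  then have "(\<Sum>k<N. \<Sum>i\<in>I. A (rot k i)) = (\<Sum>i\<in>I. \<Sum>j<N. A j)"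
    by (subst sum.swap) (rule sum.cong[OF refl], rule sum.reindex_bij_betw)
  also have "\<dots> = real N * avg"
    using N by (simp add: avg_def)
  finally have total: "(\<Sum>k<N. \<Sum>i\<in>I. A (rot k i)) = real N * avg" .
  \<comment> \<open>The N rotations of I cover every index exactly card I times, so one of them
    is below average.\<close>
  have "\<exists>k<N. (\<Sum>i\<in>I. A (rot k i)) \<le> avg"
  proof (rule ccontr)
    assume "\<not> ?thesis"
    then have "(\<Sum>k<N. avg) < (\<Sum>k<N. \<Sum>i\<in>I. A (rot k i))"
      using N by (intro sum_strict_mono) auto
    then show False using total by simp
  qed
  then obtain k where k: "(\<Sum>i\<in>I. A (rot k i)) \<le> avg" by blast
  have inj: "inj_on (rot k) I" using bij_betw_imp_inj_on[OF bij_rot] I by (rule inj_on_subset)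
  show thesis
  proof (rule that)
    show "rot k ` I \<subseteq> {..<N}" using N by (auto simp: rot_def)
    show "card (rot k ` I) = card I" using card_image[OF inj] .
    show "(\<Sum>j\<in>rot k ` I. A j) \<le> real (card I) / real N * (\<Sum>j<N. A j)"
      using k by (simp add: sum.reindex[OF inj] avg_def)
  qed
qed

lemma permutes_enumeration:
  assumes "distinct L" "set L = {..<N}"
  obtains p where "p permutes {..<N}" "\<And>i. i < N \<Longrightarrow> p i = L ! i"
proof -
  have "mset L = mset [0..<N]"
    using assms by (metis mset_set_set distinct_upt set_upt lessThan_atLeast0)
  then obtain p where "p permutes {..<N}" "permute_list p [0..<N] = L"
    by (metis mset_eq_permutation length_upt minus_nat.diff_0)
  then show thesis
    using that permute_list_nth[of p "[0..<N]"] permutes_in_image[of p "{..<N}"] by auto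
qed

lemma permutes_sorted_list_of_set_prefix:
  fixes A :: "nat set"
  assumes A: "A \<subseteq> {..<N}"
  obtains p where "p permutes {..<N}" "\<And>k. k < card A \<Longrightarrow> p k = sorted_list_of_set A ! k"
proof -
  have fin: "finite A" using A finite_subset by blast
  define L where "L = sorted_list_of_set A @ sorted_list_of_set ({..<N} - A)"
  have L: "distinct L" "set L = {..<N}" using fin A by (auto simp: L_def)
  obtain p where "p permutes {..<N}" "\<And>i. i < N \<Longrightarrow> p i = L ! i"
    using permutes_enumeration[OF L] by blast
  moreover have "card A \<le> N" using card_mono[OF _ A] by simp
  ultimately show thesis using that by (auto simp: L_def nth_append fin)
qed

lemma exists_permutes_sorted_list_of_set:
  fixes I J :: "nat set"
  assumes I: "I \<subseteq> {..<N}" and J: "J \<subseteq> {..<N}" and card: "card J = card I"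
  obtains \<pi> where "\<pi> permutes {..<N}"
    "\<And>k. k < card I \<Longrightarrow> \<pi> (sorted_list_of_set J ! k) = sorted_list_of_set I ! k"
proof -
  obtain p where p: "p permutes {..<N}" "\<And>k. k < card I \<Longrightarrow> p k = sorted_list_of_set I ! k"
    using permutes_sorted_list_of_set_prefix[OF I] by blast
  obtain q where q: "q permutes {..<N}" "\<And>k. k < card I \<Longrightarrow> q k = sorted_list_of_set J ! k"
    using permutes_sorted_list_of_set_prefix[OF J] card by metis
  show thesis
  proof (rule that)
    show "p \<circ> inv q permutes {..<N}" using p(1) q(1) by (simp add: permutes_compose permutes_inv)
    fix k assume "k < card I"
    then show "(p \<circ> inv q) (sorted_list_of_set J ! k) = sorted_list_of_set I ! k"
      using p q permutes_inverses(2)[OF q(1)] by (metis comp_apply)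
  qed
qed

lemma sorted_list_of_set_nth_mem:
  assumes "finite I" "k < card I"
  shows "sorted_list_of_set I ! k \<in> I"
  using assms nth_mem[of k "sorted_list_of_set I"] by simp

lemma measurable_proj_coords [measurable]:
  assumes "I \<subseteq> {..<N}"
  shows "proj_coords I \<in> Rn N \<rightarrow>\<^sub>M Rn (card I)"
  unfolding proj_coords_def Rn_def
  using assms finite_subset[OF assms] sorted_list_of_set_nth_mem
  by (intro measurable_restrict measurable_component_singleton) blast+

lemma proj_coords_in_space: "proj_coords I x \<in> space (Rn (card I))"
  by (simp add: proj_coords_def Rn_def space_PiM)

lemma lp_norm_proj_coords_diff:
  assumes "finite J"
  shows "lp_norm p (card J) (\<lambda>k. proj_coords J x k - proj_coords J y k)
         = (\<Sum>j\<in>J. \<bar>x j - y j\<bar> powr p) powr (1/p)"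
proof -
  have "bij_betw ((!) (sorted_list_of_set J)) {..<card J} J"
    using assms by (intro bij_betw_nth) auto
  then have "(\<Sum>k<card J. \<bar>x (sorted_list_of_set J ! k) - y (sorted_list_of_set J ! k)\<bar> powr p)
             = (\<Sum>j\<in>J. \<bar>x j - y j\<bar> powr p)"
    by (rule sum.reindex_bij_betw)
  then show ?thesis by (simp add: lp_norm_def proj_coords_def)
qed

lemma proj_coords_perm_coord:
  fixes I J :: "nat set"
  assumes "I \<subseteq> {..<N}" "\<pi> permutes {..<N}" "card J = card I"
    and "\<And>k. k < card I \<Longrightarrow> \<pi> (sorted_list_of_set J ! k) = sorted_list_of_set I ! k"
  shows "proj_coords I (perm_coord N \<pi> x) = proj_coords J x"
proof -
  have "inv \<pi> (sorted_list_of_set I ! k) = sorted_list_of_set J ! k" if "k < card I" for k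
    using assms(4)[OF that] permutes_inv_eq[OF assms(2)] by blast
  then show ?thesis
    using assms finite_subset[OF assms(1)] sorted_list_of_set_nth_mem[of I]
    by (auto simp: proj_coords_def perm_coord_def fun_eq_iff)
qed

lemma integrable_bounded_proj_coords:
  fixes f :: "(nat \<Rightarrow> real) \<Rightarrow> real"
  assumes "prob_space M" "sets M = sets (Rn N)" "I \<subseteq> {..<N}"
    and "f \<in> borel_measurable (Rn (card I))" "\<And>x. \<bar>f x\<bar> \<le> B"
  shows "integrable M (\<lambda>x. f (proj_coords I x))"
proof -
  interpret prob_space M by fact
  show ?thesis
    using measurable_compose[OF measurable_proj_coords[OF assms(3)] assms(4)] assms(5)
    by (intro integrable_const_bound[of _ B]) (auto simp: measurable_cong_sets[OF assms(2) refl])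
qed

lemma perm_invariant_integral_proj_coords:
  fixes f :: "(nat \<Rightarrow> real) \<Rightarrow> real" and I J :: "nat set"
  assumes M: "perm_invariant N M" and I: "I \<subseteq> {..<N}" and J: "J \<subseteq> {..<N}"
    and card: "card J = card I" and int: "integrable M (\<lambda>x. f (proj_coords I x))"
  shows "(\<integral>x. f (proj_coords I x) \<partial>M) = (\<integral>x. f (proj_coords J x) \<partial>M)"
proof -
  obtain \<pi> where \<pi>: "\<pi> permutes {..<N}"
    "\<And>k. k < card I \<Longrightarrow> \<pi> (sorted_list_of_set J ! k) = sorted_list_of_set I ! k"
    using exists_permutes_sorted_list_of_set[OF I J card] by blast
  have invariant: "(\<integral>x. g (perm_coord N \<pi> x) \<partial>M) = (\<integral>x. g x \<partial>M)" if "integrable M g"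
    for g :: "(nat \<Rightarrow> real) \<Rightarrow> real"
    using M[unfolded perm_invariant_def, rule_format, OF \<pi>(1) that] .
  have "(\<integral>x. f (proj_coords I x) \<partial>M) = (\<integral>x. f (proj_coords I (perm_coord N \<pi> x)) \<partial>M)"
    using invariant[OF int] by simp
  also have "\<dots> = (\<integral>x. f (proj_coords J x) \<partial>M)"
    using proj_coords_perm_coord[OF I \<pi>(1) card \<pi>(2)] by simp
  finally show ?thesis .
qed

section \<open>Moment inequalities\<close>

lemma powr_inverse_le_one_plus:
  fixes v p :: real
  assumes "0 \<le> v" "1 \<le> p"
  shows "v powr (1/p) \<le> 1 + v"
proof (cases "v \<le> 1")
  case True
  then have "v powr (1/p) \<le> 1" using assms by (intro powr_le1) auto
  then show ?thesis using assms by linarith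
next
  case False
  then have "v powr (1/p) \<le> v powr 1" using assms by (intro powr_mono) auto
  then show ?thesis using False by simp
qed

text \<open>Divided by \<open>s powr (1 - 1/p)\<close>, this is the tangent line bound at \<open>s\<close> for the
  concave map \<open>v \<mapsto> v powr (1/p)\<close>.\<close>
lemma Young_powr_inverse:
  fixes v s p :: real
  assumes v: "0 \<le> v" and s: "0 < s" and p: "1 \<le> p"
  shows "v powr (1/p) * s powr (1 - 1/p) \<le> v / p + (1 - 1/p) * s"
proof (cases "v = 0")
  case True
  then show ?thesis using s p by simp
next
  case False
  then show ?thesis using Youngs_inequality_0[of "1/p" "1 - 1/p" v s] v s p by simp
qed

lemma (in prob_space) expectation_root_le_root_expectation:
  fixes V :: "'a \<Rightarrow> real"
  assumes V: "integrable M V" and V_nonneg: "\<And>x. x \<in> space M \<Longrightarrow> 0 \<le> V x" and p: "1 \<le> p"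
  shows "integrable M (\<lambda>x. V x powr (1/p))"
    and "expectation (\<lambda>x. V x powr (1/p)) \<le> expectation V powr (1/p)"
proof -
  have V_meas: "V \<in> borel_measurable M" using V by (rule borel_measurable_integrable)
  show root_int: "integrable M (\<lambda>x. V x powr (1/p))"
  proof (rule Bochner_Integration.integrable_bound)
    show "integrable M (\<lambda>x. 1 + V x)" using V by simp
    show "(\<lambda>x. V x powr (1/p)) \<in> borel_measurable M" using V_meas by measurable
    show "AE x in M. norm (V x powr (1/p)) \<le> norm (1 + V x)"
      using V_nonneg powr_inverse_le_one_plus[OF _ p] by (intro AE_I2) simp
  qed
  define s where "s = expectation V"
  have "0 \<le> s" unfolding s_def by (rule Bochner_Integration.integral_nonneg) (rule V_nonneg)
  show "expectation (\<lambda>x. V x powr (1/p)) \<le> s powr (1/p)"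
  proof (cases "s = 0")
    case True
    then have "AE x in M. V x = 0"
      using integral_nonneg_eq_0_iff_AE[OF V] V_nonneg unfolding s_def by (simp add: AE_I2)
    then have "AE x in M. V x powr (1/p) = 0" by (rule AE_mp) (intro AE_I2, simp)
    then have "expectation (\<lambda>x. V x powr (1/p)) = expectation (\<lambda>_. 0)"
      using root_int by (intro integral_cong_AE) auto
    then show ?thesis by simp
  next
    case False
    with \<open>0 \<le> s\<close> have s: "0 < s" by simp
    have "expectation (\<lambda>x. V x powr (1/p)) * s powr (1 - 1/p)
          = expectation (\<lambda>x. V x powr (1/p) * s powr (1 - 1/p))" by simp
    also have "\<dots> \<le> expectation (\<lambda>x. V x / p + (1 - 1/p) * s)"
      using Young_powr_inverse[OF V_nonneg s p] root_int V by (intro integral_mono) auto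
    also have "\<dots> = s / p + (1 - 1/p) * s"
      using V by (simp add: s_def prob_space)
    also have "\<dots> = s powr (1/p) * s powr (1 - 1/p)"
      using s by (simp add: algebra_simps flip: powr_add)
    finally show ?thesis using s by simp
  qed
qed

lemma (in prob_space) expectation_abs_le_sqrt_second_moment:
  fixes Y :: "'a \<Rightarrow> real"
  assumes [measurable]: "Y \<in> borel_measurable M" and Y2: "integrable M (\<lambda>x. (Y x)\<^sup>2)"
  shows "expectation (\<lambda>x. \<bar>Y x\<bar>) \<le> sqrt (expectation (\<lambda>x. (Y x)\<^sup>2))"
proof (rule real_le_rsqrt)
  have "integrable M (\<lambda>x. \<bar>Y x\<bar>)"
    using square_integrable_imp_integrable[OF _ Y2] by simp
  then show "(expectation (\<lambda>x. \<bar>Y x\<bar>))\<^sup>2 \<le> expectation (\<lambda>x. (Y x)\<^sup>2)"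
    using variance_positive[of "\<lambda>x. \<bar>Y x\<bar>"] variance_eq[of "\<lambda>x. \<bar>Y x\<bar>"] Y2 by simp
qed

lemma (in prob_space) expectation_deviation_le_lipschitz:
  fixes X g :: "'a \<Rightarrow> real"
  assumes [measurable]: "X \<in> borel_measurable M" and X2: "integrable M (\<lambda>x. (X x)\<^sup>2)"
    and g: "integrable M g" and L: "0 \<le> L"
    and lip: "\<And>x. x \<in> space M \<Longrightarrow> \<bar>g0 - g x\<bar> \<le> L * \<bar>c - X x\<bar>"
  shows "\<bar>g0 - expectation g\<bar> \<le> L * (sqrt (variance X) + \<bar>c - expectation X\<bar>)"
proof -
  have X: "integrable M X" using square_integrable_imp_integrable[OF _ X2] by simp
  define Y where "Y x = X x - expectation X" for x
  have Y2: "integrable M (\<lambda>x. (Y x)\<^sup>2)"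
    using X X2 by (simp add: Y_def power2_diff)
  have Y: "integrable M (\<lambda>x. \<bar>Y x\<bar>)" using X by (simp add: Y_def)
  have "\<bar>g0 - expectation g\<bar> = \<bar>expectation (\<lambda>x. g0 - g x)\<bar>"
    using g prob_space by simp
  also have "\<dots> \<le> expectation (\<lambda>x. L * (\<bar>Y x\<bar> + \<bar>c - expectation X\<bar>))"
  proof (rule order_trans[OF integral_abs_bound integral_mono])
    show "integrable M (\<lambda>x. \<bar>g0 - g x\<bar>)" using g by simp
    show "integrable M (\<lambda>x. L * (\<bar>Y x\<bar> + \<bar>c - expectation X\<bar>))" using Y by simp
    show "\<bar>g0 - g x\<bar> \<le> L * (\<bar>Y x\<bar> + \<bar>c - expectation X\<bar>)" if "x \<in> space M" for x
    proof -
      have "\<bar>c - X x\<bar> \<le> \<bar>Y x\<bar> + \<bar>c - expectation X\<bar>" unfolding Y_def by linarith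
      then show ?thesis using order_trans[OF lip[OF that] mult_left_mono[OF _ L]] by blast
    qed
  qed
  also have "\<dots> = L * (expectation (\<lambda>x. \<bar>Y x\<bar>) + \<bar>c - expectation X\<bar>)"
    using Y prob_space by simp
  also have "\<dots> \<le> L * (sqrt (variance X) + \<bar>c - expectation X\<bar>)"
    using expectation_abs_le_sqrt_second_moment[OF _ Y2] L
    by (intro mult_left_mono add_right_mono) (simp_all add: Y_def)
  finally show ?thesis .
qed

section \<open>Couplings and the Wasserstein distance\<close>

lemma couplings_measurable:
  assumes "\<gamma> \<in> couplings M1 M2"
  shows "fst \<in> \<gamma> \<rightarrow>\<^sub>M M1" and "snd \<in> \<gamma> \<rightarrow>\<^sub>M M2"
  using assms measurable_cong_sets[of \<gamma> "M1 \<Otimes>\<^sub>M M2"]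
  by (auto simp: couplings_def)

lemma prob_space_couplings:
  assumes "\<gamma> \<in> couplings M1 M2" "prob_space M1"
  shows "prob_space \<gamma>"
  using prob_space_distrD[OF couplings_measurable(1)[OF assms(1)]] assms
  by (simp add: couplings_def)

lemma integral_couplings:
  fixes h :: "'a \<Rightarrow> real" and g :: "'b \<Rightarrow> real"
  assumes "\<gamma> \<in> couplings M1 M2" "h \<in> borel_measurable M1" "g \<in> borel_measurable M2"
  shows "(\<integral>x. h x \<partial>M1) = (\<integral>z. h (fst z) \<partial>\<gamma>)" and "(\<integral>y. g y \<partial>M2) = (\<integral>z. g (snd z) \<partial>\<gamma>)"
  using assms integral_distr[OF couplings_measurable(1)[OF assms(1)], of h]
    integral_distr[OF couplings_measurable(2)[OF assms(1)], of g]
  by (auto simp: couplings_def)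

lemma wp_cost_eq_sum_integrals:
  fixes \<gamma> :: "((nat \<Rightarrow> real) \<times> (nat \<Rightarrow> real)) measure"
  assumes sets: "sets \<gamma> = sets (Rn N \<Otimes>\<^sub>M Rn N)" and N: "0 < N" and fin: "wp_cost p N \<gamma> \<noteq> \<top>"
  shows "\<And>j. j < N \<Longrightarrow> integrable \<gamma> (\<lambda>z. \<bar>fst z j - snd z j\<bar> powr p)"
    and "enn2real (wp_cost p N \<gamma>) = (\<Sum>j<N. \<integral>z. \<bar>fst z j - snd z j\<bar> powr p \<partial>\<gamma>) / real N"
proof -
  define a where "a j z = \<bar>fst z j - snd z j\<bar> powr p" for j :: nat and z :: "(nat \<Rightarrow> real) \<times> (nat \<Rightarrow> real)"
  have a_meas: "a j \<in> borel_measurable \<gamma>" if "j < N" for j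
  proof -
    have "(\<lambda>z. fst z j) \<in> borel_measurable (Rn N \<Otimes>\<^sub>M Rn N)"
      "(\<lambda>z. snd z j) \<in> borel_measurable (Rn N \<Otimes>\<^sub>M Rn N)"
      using that unfolding Rn_def
      by (auto intro!: measurable_compose[OF measurable_fst measurable_component_singleton]
          measurable_compose[OF measurable_snd measurable_component_singleton])
    then show ?thesis unfolding a_def measurable_cong_sets[OF sets refl] by measurable
  qed
  have sum_meas: "(\<lambda>z. \<Sum>j<N. a j z) \<in> borel_measurable \<gamma>"
    using a_meas by (intro borel_measurable_sum) auto
  have a_nonneg: "0 \<le> a j z" for j z by (simp add: a_def)
  have cost: "wp_cost p N \<gamma> = (\<integral>\<^sup>+z. ennreal (1 / real N * (\<Sum>j<N. a j z)) \<partial>\<gamma>)"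
    by (simp add: wp_cost_def a_def)
  have cost_int: "integrable \<gamma> (\<lambda>z. 1 / real N * (\<Sum>j<N. a j z))"
  proof (rule integrableI_nonneg)
    show "(\<lambda>z. 1 / real N * (\<Sum>j<N. a j z)) \<in> borel_measurable \<gamma>"
      using sum_meas by (rule borel_measurable_times[OF borel_measurable_const])
    show "AE z in \<gamma>. 0 \<le> 1 / real N * (\<Sum>j<N. a j z)"
      using a_nonneg by (intro AE_I2 mult_nonneg_nonneg sum_nonneg) auto
    show "(\<integral>\<^sup>+z. ennreal (1 / real N * (\<Sum>j<N. a j z)) \<partial>\<gamma>) < \<infinity>"
      using fin by (simp add: cost less_top)
  qed
  then have "integrable \<gamma> (\<lambda>z. real N * (1 / real N * (\<Sum>j<N. a j z)))"
    by (rule Bochner_Integration.integrable_mult_right)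
  then have sum_int: "integrable \<gamma> (\<lambda>z. \<Sum>j<N. a j z)" using N by simp
  show a_int: "integrable \<gamma> (a j)" if "j < N" for j
  proof (rule Bochner_Integration.integrable_bound[OF sum_int a_meas[OF that] AE_I2])
    fix z
    show "norm (a j z) \<le> norm (\<Sum>i<N. a i z)"
      using that a_nonneg member_le_sum[of j "{..<N}" "\<lambda>i. a i z"] by (simp add: sum_nonneg)
  qed
  have "wp_cost p N \<gamma> = ennreal (\<integral>z. 1 / real N * (\<Sum>j<N. a j z) \<partial>\<gamma>)"
    unfolding cost using cost_int a_nonneg by (intro nn_integral_eq_integral) (auto simp: sum_nonneg)
  also have "(\<integral>z. 1 / real N * (\<Sum>j<N. a j z) \<partial>\<gamma>) = (\<Sum>j<N. \<integral>z. a j z \<partial>\<gamma>) / real N"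
    using a_int by (simp add: Bochner_Integration.integral_sum)
  finally have "wp_cost p N \<gamma> = ennreal ((\<Sum>j<N. \<integral>z. a j z \<partial>\<gamma>) / real N)" .
  moreover have "0 \<le> (\<Sum>j<N. \<integral>z. a j z \<partial>\<gamma>) / real N"
    using a_nonneg by (intro divide_nonneg_nonneg sum_nonneg integral_nonneg) auto
  ultimately show "enn2real (wp_cost p N \<gamma>) = (\<Sum>j<N. \<integral>z. \<bar>fst z j - snd z j\<bar> powr p \<partial>\<gamma>) / real N"
    by (simp add: a_def)
qed

lemma integral_proj_coords_diff_le_coupling:
  fixes f :: "(nat \<Rightarrow> real) \<Rightarrow> real" and J :: "nat set"
  assumes p: "1 \<le> p" and sets1: "sets M1 = sets (Rn N)" and sets2: "sets M2 = sets (Rn N)"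
    and prob1: "prob_space M1" and J: "J \<subseteq> {..<N}"
    and f_meas: "f \<in> borel_measurable (Rn (card J))" and f_bdd: "\<And>x. \<bar>f x\<bar> \<le> B"
    and f_lip: "\<forall>x\<in>space (Rn (card J)). \<forall>y\<in>space (Rn (card J)).
                  \<bar>f x - f y\<bar> \<le> lp_norm p (card J) (\<lambda>k. x k - y k)"
    and \<gamma>: "\<gamma> \<in> couplings M1 M2"
    and cost_int: "\<And>j. j \<in> J \<Longrightarrow> integrable \<gamma> (\<lambda>z. \<bar>fst z j - snd z j\<bar> powr p)"
  shows "\<bar>(\<integral>x. f (proj_coords J x) \<partial>M1) - (\<integral>x. f (proj_coords J x) \<partial>M2)\<bar>
         \<le> (\<Sum>j\<in>J. \<integral>z. \<bar>fst z j - snd z j\<bar> powr p \<partial>\<gamma>) powr (1/p)"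
proof -
  interpret \<gamma>: prob_space \<gamma> using prob_space_couplings[OF \<gamma> prob1] .
  define h where "h x = f (proj_coords J x)" for x
  define V where "V z = (\<Sum>j\<in>J. \<bar>fst z j - snd z j\<bar> powr p)" for z :: "(nat \<Rightarrow> real) \<times> (nat \<Rightarrow> real)"
  have h_meas: "h \<in> borel_measurable M" if "sets M = sets (Rn N)" for M
    unfolding h_def measurable_cong_sets[OF that refl]
    using measurable_compose[OF measurable_proj_coords[OF J] f_meas] .
  have h_int: "integrable \<gamma> (\<lambda>z. h (fst z))" "integrable \<gamma> (\<lambda>z. h (snd z))"
    using measurable_compose[OF couplings_measurable(1)[OF \<gamma>] h_meas[OF sets1]]
      measurable_compose[OF couplings_measurable(2)[OF \<gamma>] h_meas[OF sets2]] f_bdd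
    by (auto intro!: \<gamma>.integrable_const_bound[of _ B] simp: h_def)
  have V_int: "integrable \<gamma> V"
    unfolding V_def using cost_int by (intro Bochner_Integration.integrable_sum) auto
  have V_nonneg: "0 \<le> V z" for z by (simp add: V_def sum_nonneg)
  have h_lip: "\<bar>h (fst z) - h (snd z)\<bar> \<le> V z powr (1/p)" for z
  proof -
    have "\<bar>h (fst z) - h (snd z)\<bar>
          \<le> lp_norm p (card J) (\<lambda>k. proj_coords J (fst z) k - proj_coords J (snd z) k)"
      unfolding h_def using f_lip proj_coords_in_space by blast
    also have "\<dots> = V z powr (1/p)"
      unfolding V_def by (rule lp_norm_proj_coords_diff[OF finite_subset[OF J finite_lessThan]])
    finally show ?thesis .
  qed
  have "(\<integral>x. h x \<partial>M1) - (\<integral>x. h x \<partial>M2) = \<gamma>.expectation (\<lambda>z. h (fst z) - h (snd z))"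
    using integral_couplings[OF \<gamma> h_meas[OF sets1] h_meas[OF sets2]] h_int by simp
  also have "\<bar>\<dots>\<bar> \<le> \<gamma>.expectation (\<lambda>z. V z powr (1/p))"
    using \<gamma>.expectation_root_le_root_expectation(1)[OF V_int V_nonneg p] h_int h_lip
    by (intro order_trans[OF integral_abs_bound] integral_mono) auto
  also have "\<dots> \<le> \<gamma>.expectation V powr (1/p)"
    by (rule \<gamma>.expectation_root_le_root_expectation(2)[OF V_int V_nonneg p])
  also have "\<gamma>.expectation V = (\<Sum>j\<in>J. \<integral>z. \<bar>fst z j - snd z j\<bar> powr p \<partial>\<gamma>)"
    unfolding V_def using cost_int by (rule Bochner_Integration.integral_sum)
  finally show ?thesis by (simp add: h_def)
qed

lemma integral_proj_coords_diff_le_wp_cost: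
  fixes f :: "(nat \<Rightarrow> real) \<Rightarrow> real" and I :: "nat set"
  assumes N: "0 < N" and p: "1 \<le> p"
    and sets1: "sets M1 = sets (Rn N)" and sets2: "sets M2 = sets (Rn N)"
    and prob1: "prob_space M1" and prob2: "prob_space M2"
    and perm1: "perm_invariant N M1" and perm2: "perm_invariant N M2"
    and I: "I \<subseteq> {..<N}"
    and f_meas: "f \<in> borel_measurable (Rn (card I))" and f_bdd: "\<And>x. \<bar>f x\<bar> \<le> B"
    and f_lip: "\<forall>x\<in>space (Rn (card I)). \<forall>y\<in>space (Rn (card I)).
                  \<bar>f x - f y\<bar> \<le> lp_norm p (card I) (\<lambda>k. x k - y k)"
    and \<gamma>: "\<gamma> \<in> couplings M1 M2" and fin: "wp_cost p N \<gamma> \<noteq> \<top>"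
  shows "\<bar>(\<integral>x. f (proj_coords I x) \<partial>M1) - (\<integral>x. f (proj_coords I x) \<partial>M2)\<bar>
         \<le> (real (card I) * enn2real (wp_cost p N \<gamma>)) powr (1/p)"
proof -
  define c where "c j = (\<integral>z. \<bar>fst z j - snd z j\<bar> powr p \<partial>\<gamma>)" for j
  have "sets \<gamma> = sets (Rn N \<Otimes>\<^sub>M Rn N)"
    using \<gamma> sets_pair_measure_cong[OF sets1 sets2] by (simp add: couplings_def)
  note cost = wp_cost_eq_sum_integrals[OF this N fin, folded c_def]
  \<comment> \<open>By permutation invariance, I may be traded for an index set J carrying at most
    its share card I / N of the cost.\<close>
  obtain J where J: "J \<subseteq> {..<N}" "card J = card I"
    and J_cost: "(\<Sum>j\<in>J. c j) \<le> real (card I) * enn2real (wp_cost p N \<gamma>)"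
    using exists_card_subset_sum_le_average[OF I N, of c] by (auto simp: cost(2))
  have same_integral: "(\<integral>x. f (proj_coords I x) \<partial>M) = (\<integral>x. f (proj_coords J x) \<partial>M)"
    if "sets M = sets (Rn N)" "prob_space M" "perm_invariant N M" for M
    using perm_invariant_integral_proj_coords[OF that(3) I J]
      integrable_bounded_proj_coords[OF that(2,1) I f_meas f_bdd] .
  have "\<bar>(\<integral>x. f (proj_coords J x) \<partial>M1) - (\<integral>x. f (proj_coords J x) \<partial>M2)\<bar>
        \<le> (\<Sum>j\<in>J. c j) powr (1/p)"
    unfolding c_def using f_meas f_lip J cost(1)
    by (intro integral_proj_coords_diff_le_coupling[OF p sets1 sets2 prob1 J(1) _ f_bdd _ \<gamma>]) auto
  also have "\<dots> \<le> (real (card I) * enn2real (wp_cost p N \<gamma>)) powr (1/p)"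
    using J_cost J(1) p by (intro powr_mono2) (auto simp: c_def intro!: sum_nonneg integral_nonneg)
  finally show ?thesis
    using same_integral[OF sets1 prob1 perm1] same_integral[OF sets2 prob2 perm2] by simp
qed

lemma le_mult_enn2real_INF:
  fixes F :: "'a \<Rightarrow> ennreal" and x n :: real
  assumes fin: "(INF i\<in>S. F i) \<noteq> \<top>" and n: "0 \<le> n"
    and le: "\<And>i. i \<in> S \<Longrightarrow> F i \<noteq> \<top> \<Longrightarrow> x \<le> n * enn2real (F i)"
  shows "x \<le> n * enn2real (INF i\<in>S. F i)"
proof (rule field_le_epsilon)
  fix e :: real assume e: "0 < e"
  define c where "c = enn2real (INF i\<in>S. F i)"
  define \<delta> where "\<delta> = e / (n + 1)"
  have \<delta>: "0 < \<delta>" using e n by (simp add: \<delta>_def)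
  have "(INF i\<in>S. F i) < ennreal (c + \<delta>)"
    using fin \<delta> by (cases "INF i\<in>S. F i") (auto simp: c_def ennreal_less_iff)
  then obtain i where i: "i \<in> S" and Fi: "F i < ennreal (c + \<delta>)"
    by (auto simp: INF_less_iff)
  have "enn2real (F i) \<le> enn2real (ennreal (c + \<delta>))"
    using Fi by (intro enn2real_mono) auto
  moreover have "enn2real (ennreal (c + \<delta>)) = c + \<delta>"
    using \<delta> by (intro enn2real_ennreal) (simp add: c_def)
  ultimately have "enn2real (F i) \<le> c + \<delta>" by linarith
  moreover have "x \<le> n * enn2real (F i)"
    using le[OF i] Fi by (metis ennreal_less_top order.strict_trans top.not_eq_extremum)
  ultimately have "x \<le> n * (c + \<delta>)"
    using n by (meson mult_left_mono order_trans)
  also have "\<dots> \<le> n * c + e"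
    using e n by (simp add: \<delta>_def field_simps)
  finally show "x \<le> n * c + e" .
qed

lemma integral_proj_coords_diff_le_wasserstein_p:
  fixes f :: "(nat \<Rightarrow> real) \<Rightarrow> real" and I :: "nat set"
  assumes N: "0 < N" and p: "1 \<le> p"
    and sets1: "sets M1 = sets (Rn N)" and sets2: "sets M2 = sets (Rn N)"
    and prob1: "prob_space M1" and prob2: "prob_space M2"
    and perm1: "perm_invariant N M1" and perm2: "perm_invariant N M2"
    and I: "I \<subseteq> {..<N}"
    and f_meas: "f \<in> borel_measurable (Rn (card I))" and f_bdd: "\<And>x. \<bar>f x\<bar> \<le> B"
    and f_lip: "\<forall>x\<in>space (Rn (card I)). \<forall>y\<in>space (Rn (card I)).
                  \<bar>f x - f y\<bar> \<le> lp_norm p (card I) (\<lambda>k. x k - y k)"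
    and W: "wasserstein_p p M1 M2 N \<le> ennreal W" and W_nonneg: "0 \<le> W"
  shows "\<bar>(\<integral>x. f (proj_coords I x) \<partial>M1) - (\<integral>x. f (proj_coords I x) \<partial>M2)\<bar>
         \<le> real (card I) powr (1/p) * W"
proof -
  define D where "D = \<bar>(\<integral>x. f (proj_coords I x) \<partial>M1) - (\<integral>x. f (proj_coords I x) \<partial>M2)\<bar>"
  define c where "c = (INF \<gamma>\<in>couplings M1 M2. wp_cost p N \<gamma>)"
  have c_fin: "c \<noteq> \<top>"
    using W by (auto simp: wasserstein_p_def c_def[symmetric] top_unique)
  then have c_root: "enn2real c powr (1/p) \<le> W"
    using W W_nonneg by (auto simp: wasserstein_p_def c_def[symmetric])
  have "D powr p \<le> real (card I) * enn2real c"
    unfolding c_def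
  proof (rule le_mult_enn2real_INF)
    fix \<gamma> assume "\<gamma> \<in> couplings M1 M2" "wp_cost p N \<gamma> \<noteq> \<top>"
    then have "D \<le> (real (card I) * enn2real (wp_cost p N \<gamma>)) powr (1/p)"
      unfolding D_def by (rule integral_proj_coords_diff_le_wp_cost[OF N p sets1 sets2 prob1 prob2
            perm1 perm2 I f_meas f_bdd f_lip])
    then have "D powr p \<le> ((real (card I) * enn2real (wp_cost p N \<gamma>)) powr (1/p)) powr p"
      using p by (intro powr_mono2) (auto simp: D_def)
    then show "D powr p \<le> real (card I) * enn2real (wp_cost p N \<gamma>)"
      using p by (simp add: powr_powr)
  qed (use c_fin in \<open>simp_all add: c_def\<close>)
  then have "D \<le> (real (card I) * enn2real c) powr (1/p)"
    using p powr_mono2[of "1/p" "D powr p"] by (simp add: D_def powr_powr)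
  also have "\<dots> \<le> real (card I) powr (1/p) * W"
    using c_root by (simp add: powr_mult mult_left_mono)
  finally show ?thesis by (simp add: D_def)
qed

section \<open>The canonical ensemble as a mixture of microcanonical ones\<close>

definition canon_energy_distr :: "real set \<Rightarrow> real \<Rightarrow> nat \<Rightarrow> (real \<Rightarrow> real) \<Rightarrow> real measure" where
  "canon_energy_distr E \<beta> N Z =
     density (restrict_space lborel E) (\<lambda>\<epsilon>. canon_weight \<beta> N Z \<epsilon> / canon_partition E \<beta> N Z)"

lemma space_canon_energy_distr [simp]: "space (canon_energy_distr E \<beta> N Z) = E"
  by (simp add: canon_energy_distr_def space_restrict_space)

lemma sets_canon_energy_distr: "sets (canon_energy_distr E \<beta> N Z) = sets (restrict_space borel E)"
  by (simp add: canon_energy_distr_def cong: sets_restrict_space_cong)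

locale canonical_ensemble =
  fixes N :: nat and E :: "real set" and H :: "(nat \<Rightarrow> real) \<Rightarrow> real"
    and \<mu> :: "real \<Rightarrow> (nat \<Rightarrow> real) measure" and \<beta> :: real and Z :: "real \<Rightarrow> real"
  assumes E_borel: "E \<in> sets borel"
    and H_meas: "H \<in> borel_measurable (Rn N)"
    and MC_prob: "\<forall>\<epsilon>'\<in>E. prob_space (\<mu> \<epsilon>')"
    and MC_sets: "\<forall>\<epsilon>'\<in>E. sets (\<mu> \<epsilon>') = sets (Rn N)"
    and MC_support: "\<forall>\<epsilon>'\<in>E. AE \<phi> in \<mu> \<epsilon>'. H \<phi> = \<epsilon>' * real N"
    and MC_kernel: "\<mu> \<in> restrict_space borel E \<rightarrow>\<^sub>M subprob_algebra (Rn N)"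
    and Z_nonneg: "\<forall>\<epsilon>'\<in>E. Z \<epsilon>' \<ge> 0"
    and part_int: "set_integrable lborel E (canon_weight \<beta> N Z)"
    and part_pos: "canon_partition E \<beta> N Z > 0"
begin

abbreviation "\<nu> \<equiv> canon_energy_distr E \<beta> N Z"

lemma set_integral_restrict_space_E:
  fixes h :: "real \<Rightarrow> real"
  shows "set_integrable lborel E h \<longleftrightarrow> integrable (restrict_space lborel E) h"
    and "(LINT \<epsilon>:E|lborel. h \<epsilon>) = integral\<^sup>L (restrict_space lborel E) h"
  using E_borel set_integrable_eq[of E lborel h] integral_restrict_space[of E lborel h]
  by (simp_all add: set_lebesgue_integral_def)

lemma energy_density_measurable:
  "(\<lambda>\<epsilon>. canon_weight \<beta> N Z \<epsilon> / canon_partition E \<beta> N Z) \<in> borel_measurable (restrict_space lborel E)"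
  using part_int by (simp add: set_integral_restrict_space_E)

lemma energy_density_nonneg:
  "\<epsilon> \<in> space (restrict_space lborel E) \<Longrightarrow> 0 \<le> canon_weight \<beta> N Z \<epsilon> / canon_partition E \<beta> N Z"
  using Z_nonneg part_pos by (simp add: space_restrict_space canon_weight_def)

sublocale \<nu>: prob_space \<nu>
proof
  have "(\<integral>\<^sup>+\<epsilon>. ennreal (canon_weight \<beta> N Z \<epsilon> / canon_partition E \<beta> N Z) \<partial>restrict_space lborel E)
        = ennreal (\<integral>\<epsilon>. canon_weight \<beta> N Z \<epsilon> / canon_partition E \<beta> N Z \<partial>restrict_space lborel E)"
    using part_int energy_density_nonneg
    by (intro nn_integral_eq_integral AE_I2) (auto simp: set_integral_restrict_space_E)
  also have "\<dots> = 1"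
    using part_pos by (simp add: canon_partition_def set_integral_restrict_space_E)
  finally show "emeasure \<nu> (space \<nu>) = 1"
    using energy_density_measurable by (simp add: canon_energy_distr_def emeasure_density)
qed

lemma integrable_energy_distr_iff:
  fixes h :: "real \<Rightarrow> real"
  assumes "h \<in> borel_measurable (restrict_space lborel E)"
  shows "integrable \<nu> h \<longleftrightarrow> set_integrable lborel E (\<lambda>\<epsilon>. canon_weight \<beta> N Z \<epsilon> * h \<epsilon>)"
proof -
  have "integrable \<nu> h \<longleftrightarrow> integrable (restrict_space lborel E)
          (\<lambda>\<epsilon>. 1 / canon_partition E \<beta> N Z * (canon_weight \<beta> N Z \<epsilon> * h \<epsilon>))"
    unfolding canon_energy_distr_def using assms energy_density_measurable energy_density_nonneg
    by (subst integrable_density) (auto intro: AE_I2)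
  also have "\<dots> \<longleftrightarrow> set_integrable lborel E (\<lambda>\<epsilon>. canon_weight \<beta> N Z \<epsilon> * h \<epsilon>)"
    using part_pos by (subst integrable_mult_left_iff) (simp add: set_integral_restrict_space_E(1))
  finally show ?thesis .
qed

lemma measurable_mc_expectation:
  fixes g :: "(nat \<Rightarrow> real) \<Rightarrow> real"
  assumes "g \<in> borel_measurable (Rn N)"
  shows "(\<lambda>\<epsilon>. \<integral>\<phi>. g \<phi> \<partial>\<mu> \<epsilon>) \<in> borel_measurable (restrict_space lborel E)"
    and "(\<lambda>\<epsilon>. \<integral>\<phi>. g \<phi> \<partial>\<mu> \<epsilon>) \<in> borel_measurable \<nu>"
  using measurable_compose[OF MC_kernel integral_measurable_subprob_algebra[OF assms]]
  by (simp_all add: measurable_cong_sets[OF sets_canon_energy_distr refl]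
      measurable_cong_sets[OF sets_restrict_space_cong[OF sets_lborel] refl])

lemma measurable_energy: "(\<lambda>x. x) \<in> borel_measurable \<nu>"
  unfolding measurable_cong_sets[OF sets_canon_energy_distr refl]
  by (rule measurable_restrict_space1) simp

lemma canon_exp_eq_expectation:
  fixes g :: "(nat \<Rightarrow> real) \<Rightarrow> real"
  assumes "g \<in> borel_measurable (Rn N)"
  shows "canon_exp E \<beta> N Z \<mu> g = \<nu>.expectation (\<lambda>\<epsilon>. \<integral>\<phi>. g \<phi> \<partial>\<mu> \<epsilon>)"
  using measurable_mc_expectation(1)[OF assms] energy_density_measurable energy_density_nonneg
  by (auto simp: canon_energy_distr_def canon_exp_def integral_density set_integral_restrict_space_E
      intro: AE_I2)

lemma integrable_mc_expectation:
  fixes g :: "(nat \<Rightarrow> real) \<Rightarrow> real"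
  assumes g: "g \<in> borel_measurable (Rn N)" and g_bdd: "\<And>\<phi>. \<bar>g \<phi>\<bar> \<le> B"
  shows "integrable \<nu> (\<lambda>\<epsilon>. \<integral>\<phi>. g \<phi> \<partial>\<mu> \<epsilon>)"
proof (rule \<nu>.integrable_const_bound[OF AE_I2 measurable_mc_expectation(2)[OF g]])
  fix \<epsilon> assume "\<epsilon> \<in> space \<nu>"
  then interpret prob_space "\<mu> \<epsilon>" using MC_prob by simp
  have "g \<in> borel_measurable (\<mu> \<epsilon>)"
    using g MC_sets \<open>\<epsilon> \<in> space \<nu>\<close> measurable_cong_sets by fastforce
  then have "integrable (\<mu> \<epsilon>) g"
    using g_bdd by (intro integrable_const_bound[of _ B]) auto
  then have "norm (\<integral>\<phi>. g \<phi> \<partial>\<mu> \<epsilon>) \<le> (\<integral>\<phi>. B \<partial>\<mu> \<epsilon>)"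
    using g_bdd by (intro order_trans[OF integral_norm_bound integral_mono]) auto
  then show "norm (\<integral>\<phi>. g \<phi> \<partial>\<mu> \<epsilon>) \<le> B" by (simp add: prob_space)
qed

lemma mc_expectation_energy_power:
  assumes "\<epsilon> \<in> E"
  shows "(\<integral>\<phi>. (H \<phi>) ^ k \<partial>\<mu> \<epsilon>) = (\<epsilon> * real N) ^ k"
proof -
  interpret prob_space "\<mu> \<epsilon>" using MC_prob assms by simp
  have [measurable]: "H \<in> borel_measurable (\<mu> \<epsilon>)"
    using H_meas MC_sets assms measurable_cong_sets by blast
  have "AE \<phi> in \<mu> \<epsilon>. (H \<phi>) ^ k = (\<epsilon> * real N) ^ k"
    using MC_support assms by (auto elim!: eventually_mono)
  then have "(\<integral>\<phi>. (H \<phi>) ^ k \<partial>\<mu> \<epsilon>) = (\<integral>\<phi>. (\<epsilon> * real N) ^ k \<partial>\<mu> \<epsilon>)"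
    by (intro integral_cong_AE) auto
  then show ?thesis by (simp add: prob_space)
qed

lemma canon_exp_energy_power:
  "canon_exp E \<beta> N Z \<mu> (\<lambda>\<phi>. (H \<phi>) ^ k) = real N ^ k * \<nu>.expectation (\<lambda>x. x ^ k)"
proof -
  have "canon_exp E \<beta> N Z \<mu> (\<lambda>\<phi>. (H \<phi>) ^ k) = \<nu>.expectation (\<lambda>\<epsilon>. \<integral>\<phi>. (H \<phi>) ^ k \<partial>\<mu> \<epsilon>)"
    using H_meas by (simp add: canon_exp_eq_expectation)
  also have "\<dots> = \<nu>.expectation (\<lambda>x. real N ^ k * x ^ k)"
    by (intro Bochner_Integration.integral_cong)
       (auto simp: mc_expectation_energy_power power_mult_distrib)
  finally show ?thesis by simp
qed

lemma integrable_energy_square: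
  assumes N: "0 < N"
    and H2: "set_integrable lborel E (\<lambda>\<epsilon>. canon_weight \<beta> N Z \<epsilon> * (\<integral>\<phi>. (H \<phi>)\<^sup>2 \<partial>\<mu> \<epsilon>))"
  shows "integrable \<nu> (\<lambda>x. x\<^sup>2)"
proof -
  have "set_integrable lborel E (\<lambda>\<epsilon>. canon_weight \<beta> N Z \<epsilon> * (\<epsilon> * real N)\<^sup>2)"
    using H2 mc_expectation_energy_power[of _ 2] by (simp cong: set_integrable_cong)
  then have "integrable \<nu> (\<lambda>x. 1 / (real N)\<^sup>2 * (x * real N)\<^sup>2)"
    by (subst (asm) integrable_energy_distr_iff[symmetric])
       (auto intro: measurable_restrict_space1)
  then show ?thesis using N by (simp add: power_mult_distrib)
qed

lemma canon_energy_mean_variance: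
  assumes N: "0 < N"
    and H2: "set_integrable lborel E (\<lambda>\<epsilon>. canon_weight \<beta> N Z \<epsilon> * (\<integral>\<phi>. (H \<phi>)\<^sup>2 \<partial>\<mu> \<epsilon>))"
  shows "canon_exp E \<beta> N Z \<mu> H / real N = \<nu>.expectation (\<lambda>x. x)"
    and "(canon_exp E \<beta> N Z \<mu> (\<lambda>\<phi>. (H \<phi>)\<^sup>2) - (canon_exp E \<beta> N Z \<mu> H)\<^sup>2) / (real N)\<^sup>2
         = \<nu>.variance (\<lambda>x. x)"
proof -
  have mean: "canon_exp E \<beta> N Z \<mu> H = real N * \<nu>.expectation (\<lambda>x. x)"
    using canon_exp_energy_power[of 1] by simp
  have second: "canon_exp E \<beta> N Z \<mu> (\<lambda>\<phi>. (H \<phi>)\<^sup>2) = (real N)\<^sup>2 * \<nu>.expectation (\<lambda>x. x\<^sup>2)"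
    using canon_exp_energy_power[of 2] .
  have x2: "integrable \<nu> (\<lambda>x. x\<^sup>2)" by (rule integrable_energy_square[OF N H2])
  have "\<nu>.variance (\<lambda>x. x) = \<nu>.expectation (\<lambda>x. x\<^sup>2) - (\<nu>.expectation (\<lambda>x. x))\<^sup>2"
    using \<nu>.square_integrable_imp_integrable[OF measurable_energy x2] x2 by (rule \<nu>.variance_eq)
  then show "(canon_exp E \<beta> N Z \<mu> (\<lambda>\<phi>. (H \<phi>)\<^sup>2) - (canon_exp E \<beta> N Z \<mu> H)\<^sup>2) / (real N)\<^sup>2
             = \<nu>.variance (\<lambda>x. x)"
    unfolding mean second using N by (simp add: power_mult_distrib diff_divide_distrib)
  show "canon_exp E \<beta> N Z \<mu> H / real N = \<nu>.expectation (\<lambda>x. x)"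
    unfolding mean using N by simp
qed

end

theorem theorem2p5:
  fixes N :: nat and E :: "real set" and H :: "(nat \<Rightarrow> real) \<Rightarrow> real"
    and \<mu> :: "real \<Rightarrow> (nat \<Rightarrow> real) measure" and Z :: "real \<Rightarrow> real"
    and \<beta> \<epsilon> p C :: real and I :: "nat set" and f :: "(nat \<Rightarrow> real) \<Rightarrow> real"
  assumes E_borel: "E \<in> sets borel"
    and H_meas: "H \<in> borel_measurable (Rn N)"
    and MC_prob: "\<forall>\<epsilon>'\<in>E. prob_space (\<mu> \<epsilon>')"
    and MC_sets: "\<forall>\<epsilon>'\<in>E. sets (\<mu> \<epsilon>') = sets (Rn N)"
    and MC_perm: "\<forall>\<epsilon>'\<in>E. perm_invariant N (\<mu> \<epsilon>')"
    and MC_support: "\<forall>\<epsilon>'\<in>E. AE \<phi> in \<mu> \<epsilon>'. H \<phi> = \<epsilon>' * real N"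
    and MC_kernel: "\<mu> \<in> restrict_space borel E \<rightarrow>\<^sub>M subprob_algebra (Rn N)"
    and Z_nonneg: "\<forall>\<epsilon>'\<in>E. Z \<epsilon>' \<ge> 0"
    and part_int: "set_integrable lborel E (canon_weight \<beta> N Z)"
    and part_pos: "canon_partition E \<beta> N Z > 0"
    and eps_E: "\<epsilon> \<in> E"
    and p_ge: "p \<ge> 1"
    and C_pos: "C > 0"
    and W_bound: "\<forall>\<epsilon>'\<in>E. wasserstein_p p (\<mu> \<epsilon>) (\<mu> \<epsilon>') N \<le> ennreal (C * \<bar>\<epsilon> - \<epsilon>'\<bar>)"
    and mom_MC: "\<forall>\<epsilon>'\<in>E. integrable (\<mu> \<epsilon>') (\<lambda>x. \<Sum>i<N. \<bar>x i\<bar> powr p)"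
    and mom_C: "set_integrable lborel E
                  (\<lambda>\<epsilon>'. canon_weight \<beta> N Z \<epsilon>' * (\<integral>x. (\<Sum>i<N. \<bar>x i\<bar> powr p) \<partial>\<mu> \<epsilon>'))"
    and H2_C: "set_integrable lborel E
                  (\<lambda>\<epsilon>'. canon_weight \<beta> N Z \<epsilon>' * (\<integral>x. (H x)\<^sup>2 \<partial>\<mu> \<epsilon>'))"
    and I_sub: "I \<subseteq> {..<N}"
    and I_card: "card I < N"
    and f_meas: "f \<in> borel_measurable (Rn (card I))"
    and f_bdd: "\<exists>B. \<forall>x. \<bar>f x\<bar> \<le> B"
    and f_lip: "\<forall>x\<in>space (Rn (card I)). \<forall>y\<in>space (Rn (card I)).
                  \<bar>f x - f y\<bar> \<le> lp_norm p (card I) (\<lambda>k. x k - y k)"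
  shows "\<bar>(\<integral>\<phi>. f (proj_coords I \<phi>) \<partial>\<mu> \<epsilon>) - canon_exp E \<beta> N Z \<mu> (\<lambda>\<phi>. f (proj_coords I \<phi>))\<bar>
         \<le> C * (real (card I) / (1 - real (card I) / real N)) powr (1 / p)
             * (sqrt ((canon_exp E \<beta> N Z \<mu> (\<lambda>\<phi>. (H \<phi>)\<^sup>2) - (canon_exp E \<beta> N Z \<mu> H)\<^sup>2) / (real N)\<^sup>2)
                + \<bar>\<epsilon> - canon_exp E \<beta> N Z \<mu> H / real N\<bar>)"
proof -
  interpret canonical_ensemble N E H \<mu> \<beta> Z
    using E_borel H_meas MC_prob MC_sets MC_support MC_kernel Z_nonneg part_int part_pos
    by unfold_locales
  define G where "G \<epsilon>' = (\<integral>\<phi>. f (proj_coords I \<phi>) \<partial>\<mu> \<epsilon>')" for \<epsilon>'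
  define n where "n = real (card I)"
  have N: "0 < N" using I_card by simp
  obtain B where B: "\<And>x. \<bar>f x\<bar> \<le> B" using f_bdd by blast
  have f_proj_meas: "(\<lambda>\<phi>. f (proj_coords I \<phi>)) \<in> borel_measurable (Rn N)"
    using measurable_compose[OF measurable_proj_coords[OF I_sub] f_meas] .
  have canon_G: "canon_exp E \<beta> N Z \<mu> (\<lambda>\<phi>. f (proj_coords I \<phi>)) = \<nu>.expectation G"
    unfolding G_def by (rule canon_exp_eq_expectation[OF f_proj_meas])
  have G_lip: "\<bar>G \<epsilon> - G \<epsilon>'\<bar> \<le> n powr (1/p) * C * \<bar>\<epsilon> - \<epsilon>'\<bar>" if "\<epsilon>' \<in> E" for \<epsilon>'
    unfolding G_def n_def mult.assoc using that eps_E MC_sets MC_prob MC_perm W_bound C_pos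
    by (intro integral_proj_coords_diff_le_wasserstein_p[OF N p_ge _ _ _ _ _ _ I_sub f_meas B f_lip])
       auto
  have "\<bar>G \<epsilon> - \<nu>.expectation G\<bar>
        \<le> n powr (1/p) * C * (sqrt (\<nu>.variance (\<lambda>x. x)) + \<bar>\<epsilon> - \<nu>.expectation (\<lambda>x. x)\<bar>)"
    using G_lip C_pos unfolding G_def
    by (intro \<nu>.expectation_deviation_le_lipschitz measurable_energy
        integrable_energy_square[OF N H2_C] integrable_mc_expectation[OF f_proj_meas B]) auto
  also have "\<dots> \<le> C * (n / (1 - n / real N)) powr (1/p)
                 * (sqrt (\<nu>.variance (\<lambda>x. x)) + \<bar>\<epsilon> - \<nu>.expectation (\<lambda>x. x)\<bar>)"
  proof -
    have "n powr (1/p) \<le> (n / (1 - n / real N)) powr (1/p)"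
      using I_card p_ge by (intro powr_mono2) (auto simp: n_def field_simps)
    then show ?thesis
      using C_pos \<nu>.variance_positive by (auto intro!: mult_right_mono simp: mult.commute[of C])
  qed
  finally have "\<bar>G \<epsilon> - \<nu>.expectation G\<bar>
      \<le> C * (real (card I) / (1 - real (card I) / real N)) powr (1/p)
          * (sqrt (\<nu>.variance (\<lambda>x. x)) + \<bar>\<epsilon> - \<nu>.expectation (\<lambda>x. x)\<bar>)"
    unfolding n_def .
  then show ?thesis
    unfolding canon_energy_mean_variance[OF N H2_C] canon_G by (simp only: G_def)
qed

end
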